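(* Let $R$ be a ring with local units. If there is a trace $t$ on $R$ (with values in some ring) which is injective on the set of idempotents of $R$, then $R$ is directly finite. If $R$ is a $*$-ring with local units and there is a trace on $R$ which is injective on the set of projections (self-adjoint idempotents) of $R$, then $R$ is finite. In particular, a $*$-ring with local units admitting a faithful trace with values in a $*$-ring is finite.
   Context: Rings are associative, not necessarily unital. A ring $R$ has local units if for every finite subset $\{x_1,\dots,x_n\}\subseteq R$ there is an idempotent $u\in R$ with $x_iu=ux_i=x_i$ for all $i$. A ring with local units is directly finite if for all $x,y\in R$ and every idempotent $u$ with $xu=ux=x$ and $yu=uy=y$, $xy=u$ implies $yx=u$. A $*$-ring (ring with involution $x\mapsto x^*$: additive, $(xy)^*=y^*x^*$, $x^{**}=x$) with local units is finite if for all $x\in R$ and every idempotent $u$ with $xu=ux=x$, $xx^*=u$ implies $x^*x=u$. A trace is an additive map $t$ with $t(xy)=t(yx)$. In a $*$-ring, $x\ge0$ means $x$ is a finite sum of elements $zz^*$, and $x>0$ means $x\ge0$, $x\ne0$; a trace between $*$-rings is faithful if $x\ge0\Rightarrow t(x)\ge0$ and $x>0\Rightarrow t(x)>0$. *)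

theory Defs
  imports Main
begin

text \<open>Rings are associative, not necessarily unital: Isabelle's type class ring
  (semiring + ab_group_add) has no unit. The ring R is the type 'a.\<close>

definition is_idempotent :: "'a::ring \<Rightarrow> bool" where
  "is_idempotent u \<longleftrightarrow> u * u = u"

definition has_local_units :: "'a::ring itself \<Rightarrow> bool" where
  "has_local_units _ \<longleftrightarrow>
     (\<forall>F::'a set. finite F \<longrightarrow>
        (\<exists>u. is_idempotent u \<and> (\<forall>x\<in>F. x * u = x \<and> u * x = x)))"

definition directly_finite :: "'a::ring itself \<Rightarrow> bool" where
  "directly_finite _ \<longleftrightarrow>
     (\<forall>(x::'a) y u. is_idempotent u \<and> x * u = x \<and> u * x = x \<and> y * u = y \<and> u * y = y
        \<and> x * y = u \<longrightarrow> y * x = u)"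

definition is_involution :: "('a::ring \<Rightarrow> 'a) \<Rightarrow> bool" where
  "is_involution st \<longleftrightarrow>
     (\<forall>x y. st (x + y) = st x + st y) \<and>
     (\<forall>x y. st (x * y) = st y * st x) \<and>
     (\<forall>x. st (st x) = x)"

definition star_finite :: "('a::ring \<Rightarrow> 'a) \<Rightarrow> bool" where
  "star_finite st \<longleftrightarrow>
     (\<forall>x u. is_idempotent u \<and> x * u = x \<and> u * x = x \<and> x * st x = u \<longrightarrow> st x * x = u)"

definition is_trace :: "('a::ring \<Rightarrow> 'b::ring) \<Rightarrow> bool" where
  "is_trace t \<longleftrightarrow> (\<forall>x y. t (x + y) = t x + t y) \<and> (\<forall>x y. t (x * y) = t (y * x))"

definition projections :: "('a::ring \<Rightarrow> 'a) \<Rightarrow> 'a set" where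
  "projections st = {p. is_idempotent p \<and> st p = p}"

definition star_nonneg :: "('a::ring \<Rightarrow> 'a) \<Rightarrow> 'a \<Rightarrow> bool" where
  "star_nonneg st x \<longleftrightarrow> (\<exists>n::nat. \<exists>z. x = (\<Sum>i<n. z i * st (z i)))"

definition star_pos :: "('a::ring \<Rightarrow> 'a) \<Rightarrow> 'a \<Rightarrow> bool" where
  "star_pos st x \<longleftrightarrow> star_nonneg st x \<and> x \<noteq> 0"

definition faithful_trace ::
  "('a::ring \<Rightarrow> 'a) \<Rightarrow> ('b::ring \<Rightarrow> 'b) \<Rightarrow> ('a \<Rightarrow> 'b) \<Rightarrow> bool" where
  "faithful_trace stR stS t \<longleftrightarrow> is_trace t \<and>
     (\<forall>x. star_nonneg stR x \<longrightarrow> star_nonneg stS (t x)) \<and>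
     (\<forall>x. star_pos stR x \<longrightarrow> star_pos stS (t x))"

end

theory Submission
  imports Defs
begin

text \<open>If \<open>x y = u\<close> with \<open>x, y\<close> in the corner \<open>u R u\<close>, then \<open>y x\<close> is an idempotent
  with the same trace as \<open>u\<close>. In a \<open>*\<close>-ring with \<open>y = x\<^sup>*\<close> it is moreover a projection
  below \<open>u\<close>, so \<open>u - x\<^sup>* x\<close> is a projection of trace \<open>0\<close>; a trace injective on
  idempotents (resp. projections), or a faithful one, therefore forces \<open>y x = u\<close>.\<close>

lemma additive_map_diff:
  fixes f :: "'a::ab_group_add \<Rightarrow> 'b::ab_group_add"
  assumes "\<forall>x y. f (x + y) = f x + f y"
  shows "f (a - b) = f a - f b"
proof -
  have "f (a - b + b) = f (a - b) + f b" using assms by blast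
  then show ?thesis by (simp add: algebra_simps)
qed

lemma is_idempotent_swap_mult:
  assumes "x * y = u" "y * u = y"
  shows "is_idempotent (y * x)"
proof -
  have "y * x * (y * x) = y * (x * y) * x" by (simp add: mult.assoc)
  also have "\<dots> = y * x" using assms by simp
  finally show ?thesis unfolding is_idempotent_def .
qed

lemma involution_laws:
  assumes "is_involution st"
  shows involution_mult: "st (x * y) = st y * st x"
    and involution_involutive: "st (st x) = x"
    and involution_diff: "st (a - b) = st a - st b"
  using assms additive_map_diff[of st a b] unfolding is_involution_def by auto

lemma trace_diff: "is_trace t \<Longrightarrow> t (a - b) = t a - t b"
  using additive_map_diff[of t a b] unfolding is_trace_def by auto

lemma directly_finite_if_trace_inj_on_idempotents:
  fixes t :: "'a::ring \<Rightarrow> 'b::ring"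
  assumes "is_trace t" "inj_on t {e. is_idempotent e}"
  shows "directly_finite TYPE('a)"
  unfolding directly_finite_def
proof (intro allI impI)
  fix x y u :: 'a
  assume h: "is_idempotent u \<and> x * u = x \<and> u * x = x \<and> y * u = y \<and> u * y = y \<and> x * y = u"
  then have "is_idempotent (y * x)" using is_idempotent_swap_mult by blast
  moreover have "t (y * x) = t u" using assms(1) h unfolding is_trace_def by metis
  ultimately show "y * x = u" using assms(2) h unfolding inj_on_def by blast
qed

lemma star_finite_if_trace_separates_subprojections:
  fixes t :: "'a::ring \<Rightarrow> 'b::ring"
  assumes inv: "is_involution st" and tr: "is_trace t"
    and separates: "\<And>e u. e \<in> projections st \<Longrightarrow> u \<in> projections st \<Longrightarrow>
                      e * u = e \<Longrightarrow> u * e = e \<Longrightarrow> t e = t u \<Longrightarrow> e = u"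
  shows "star_finite st"
  unfolding star_finite_def
proof (intro allI impI)
  fix x u :: 'a
  assume h: "is_idempotent u \<and> x * u = x \<and> u * x = x \<and> x * st x = u"
  note st_mult = involution_mult[OF inv] and st_st = involution_involutive[OF inv]
  have st_u: "st u = u" using h by (metis st_mult st_st)
  have u_stx: "u * st x = st x" using h st_u by (metis st_mult)
  have stx_u: "st x * u = st x" using h st_u by (metis st_mult)
  let ?e = "st x * x"
  have "is_idempotent ?e" using h stx_u is_idempotent_swap_mult by blast
  then have "?e \<in> projections st" unfolding projections_def by (simp add: st_mult st_st)
  moreover have "u \<in> projections st" using h st_u unfolding projections_def by blast
  moreover have "?e * u = ?e" using h by (simp add: mult.assoc)
  moreover have "u * ?e = ?e" using u_stx by (simp add: mult.assoc[symmetric])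
  moreover have "t ?e = t u" using tr h unfolding is_trace_def by metis
  ultimately show "?e = u" by (rule separates)
qed

lemma faithful_trace_separates_subprojections:
  assumes inv: "is_involution st" and ft: "faithful_trace st stS t"
    and e: "e \<in> projections st" and u: "u \<in> projections st"
    and eu: "e * u = e" and ue: "u * e = e" and t_eq: "t e = t u"
  shows "e = u"
proof (rule ccontr)
  assume "e \<noteq> u"
  define f where "f = u - e"
  have "st f = f" using e u unfolding f_def projections_def by (simp add: involution_diff[OF inv])
  moreover have "f * f = f"
    using e u eu ue unfolding f_def projections_def is_idempotent_def by (simp add: algebra_simps)
  ultimately have "star_nonneg st f"
    unfolding star_nonneg_def by (intro exI[of _ "Suc 0"] exI[of _ "\<lambda>_. f"]) simp
  moreover have "f \<noteq> 0" using \<open>e \<noteq> u\<close> unfolding f_def by simp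
  ultimately have "star_pos st f" unfolding star_pos_def by blast
  then have "star_pos stS (t f)" using ft unfolding faithful_trace_def by blast
  moreover have "t f = 0"
    using ft t_eq unfolding faithful_trace_def f_def by (simp add: trace_diff)
  ultimately show False unfolding star_pos_def by simp
qed

theorem proposition4p2:
  shows
  "(\<forall>t :: 'a::ring \<Rightarrow> 'b::ring.
      has_local_units TYPE('a) \<and> is_trace t \<and> inj_on t {e. is_idempotent e}
      \<longrightarrow> directly_finite TYPE('a))
   \<and>
   (\<forall>(st :: 'a \<Rightarrow> 'a) (t :: 'a \<Rightarrow> 'c::ring).
      has_local_units TYPE('a) \<and> is_involution st \<and> is_trace t \<and> inj_on t (projections st)
      \<longrightarrow> star_finite st)
   \<and>
   (\<forall>(st :: 'a \<Rightarrow> 'a) (stS :: 'd::ring \<Rightarrow> 'd) (t :: 'a \<Rightarrow> 'd).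
      has_local_units TYPE('a) \<and> is_involution st \<and> is_involution stS \<and> faithful_trace st stS t
      \<longrightarrow> star_finite st)"
proof (intro conjI allI impI)
  show "directly_finite TYPE('a)"
    if "has_local_units TYPE('a) \<and> is_trace t \<and> inj_on t {e. is_idempotent e}"
    for t :: "'a \<Rightarrow> 'b"
    using that directly_finite_if_trace_inj_on_idempotents by blast
  show "star_finite st"
    if hyps: "has_local_units TYPE('a) \<and> is_involution st \<and> is_trace t \<and> inj_on t (projections st)"
    for st and t :: "'a \<Rightarrow> 'c"
  proof (rule star_finite_if_trace_separates_subprojections)
    show "is_involution st" "is_trace t" using hyps by blast+
    show "e = u" if "e \<in> projections st" "u \<in> projections st" "t e = t u" for e u
      using that hyps inj_onD by metis
  qed
  show "star_finite st"
    if hyps: "has_local_units TYPE('a) \<and> is_involution st \<and> is_involution stS \<and> faithful_trace st stS t"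
    for st and stS :: "'d \<Rightarrow> 'd" and t
  proof (rule star_finite_if_trace_separates_subprojections)
    show "is_involution st" using hyps by blast
    show "is_trace t" using hyps unfolding faithful_trace_def by blast
    show "e = u"
      if "e \<in> projections st" "u \<in> projections st" "e * u = e" "u * e = e" "t e = t u" for e u
      using hyps that faithful_trace_separates_subprojections[of st stS t e u] by blast
  qed
qed

end
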